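(* For every $n\in\mathbb N$, the normal PO-dilators $\mathbb{T}_n$ and $\mathbb{T}_{n+1}^-$ are normal WPO-dilators, i.e. $\mathbb{T}_n(X)$ and $\mathbb{T}_{n+1}^-(X)$ are well partial orders whenever $X$ is a well partial order.
   Context: A well partial order is a partial order in which every infinite sequence $x_0,x_1,\dots$ has indices $i<j$ with $x_i\leq x_j$. For a partial order $X$, $M(X)$ is the set of finite multisets $[x_0,\dots,x_{m-1}]$ with elements from $X$, ordered by $[x_0,\dots,x_{m-1}]\leq_{M(X)}[y_0,\dots,y_{k-1}]$ iff there is an injection $g$ with $x_i\leq_X y_{g(i)}$ for all $i<m$. For $n\in\mathbb N$ and a partial order $X$, $\mathbb{T}_n(X)$ is generated by: $\overline x$ for each $x\in X$; $i\star\sigma$ for each $\sigma=[t_0,\dots,t_{m-1}]\in M(\mathbb{T}_n(X))$ and $i<n$. For $n>0$, $\mathbb{T}_n^-(X)=\{\overline x\mid x\in X\}\cup\{0\star\sigma\mid\sigma\in M(\mathbb{T}_n(X))\}$. The partial order $\leq_{\mathbb{T}_n(X)}$ is defined recursively: $\overline x\leq t$ iff either $t=\overline y$ with $x\leq_X y$, or $t=j\star[t_0,\dots,t_{m-1}]$ and $\overline x\leq t_l$ for some $l<m$; $i\star\sigma\leq t$ iff either $t=i\star\tau$ with $\sigma\leq_{M(\mathbb{T}_n(X))}\tau$, or $t=j\star[t_0,\dots,t_{m-1}]$ with $j\geq i$ and $i\star\sigma\leq t_l$ for some $l<m$; $\mathbb{T}_n^-(X)$ carries the restricted order. (On quasi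 embeddings $f$, $\mathbb{T}_n(f)$ relabels leaves $\overline x\mapsto\overline{f(x)}$; supports are $\operatorname{supp}^{\mathbb{T}_n}_X(\overline x)=\{x\}$, $\operatorname{supp}^{\mathbb{T}_n}_X(i\star[t_0,\dots,t_{m-1}])=\bigcup_l\operatorname{supp}^{\mathbb{T}_n}_X(t_l)$; with these, $\mathbb{T}_n$ and $\mathbb{T}_{n+1}^-$ are normal PO-dilators. A WPO-dilator is a PO-dilator $W$ such that $W(X)$ is a well partial order whenever $X$ is.) *)

theory Defs
  imports Main "HOL-Library.Multiset"
begin

definition po_on :: "'a set \<Rightarrow> ('a \<Rightarrow> 'a \<Rightarrow> bool) \<Rightarrow> bool" where
  "po_on A le \<longleftrightarrow>
     (\<forall>x\<in>A. le x x) \<and>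
     (\<forall>x\<in>A. \<forall>y\<in>A. le x y \<and> le y x \<longrightarrow> x = y) \<and>
     (\<forall>x\<in>A. \<forall>y\<in>A. \<forall>z\<in>A. le x y \<and> le y z \<longrightarrow> le x z)"

definition wpo_on :: "'a set \<Rightarrow> ('a \<Rightarrow> 'a \<Rightarrow> bool) \<Rightarrow> bool" where
  "wpo_on A le \<longleftrightarrow> po_on A le \<and>
     (\<forall>f :: nat \<Rightarrow> 'a. (\<forall>k. f k \<in> A) \<longrightarrow> (\<exists>i j. i < j \<and> le (f i) (f j)))"

definition mle :: "('a \<Rightarrow> 'a \<Rightarrow> bool) \<Rightarrow> 'a multiset \<Rightarrow> 'a multiset \<Rightarrow> bool" where
  "mle le \<sigma> \<tau> \<longleftrightarrow> (\<exists>xs ys g. mset xs = \<sigma> \<and> mset ys = \<tau> \<and>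
      inj_on g {..<length xs} \<and> g ` {..<length xs} \<subseteq> {..<length ys} \<and>
      (\<forall>i<length xs. le (xs ! i) (ys ! g i)))"

lemma mle_mono [mono]:
  "(\<And>x y. P x y \<longrightarrow> Q x y) \<Longrightarrow> mle P \<sigma> \<tau> \<longrightarrow> mle Q \<sigma> \<tau>"
proof
  assume PQ: "\<And>x y. P x y \<longrightarrow> Q x y" and "mle P \<sigma> \<tau>"
  then obtain xs ys g where h: "mset xs = \<sigma>" "mset ys = \<tau>"
      "inj_on g {..<length xs}" "g ` {..<length xs} \<subseteq> {..<length ys}"
      "\<forall>i<length xs. P (xs ! i) (ys ! g i)"
    unfolding mle_def by blast
  show "mle Q \<sigma> \<tau>"
    unfolding mle_def
    by (rule exI[of _ xs], rule exI[of _ ys], rule exI[of _ g]) (use h PQ in auto)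
qed

text \<open>Terms: Leaf x is the term bar x; Node i sigma is the term i \<star> sigma.\<close>

datatype 'a tterm = Leaf 'a | Node nat "'a tterm multiset"

inductive in_T :: "nat \<Rightarrow> 'a set \<Rightarrow> 'a tterm \<Rightarrow> bool" for n A where
  leaf: "x \<in> A \<Longrightarrow> in_T n A (Leaf x)"
| node: "i < n \<Longrightarrow> (\<forall>t. t \<in># \<sigma> \<longrightarrow> in_T n A t) \<Longrightarrow> in_T n A (Node i \<sigma>)"

definition T :: "nat \<Rightarrow> 'a set \<Rightarrow> 'a tterm set" where
  "T n A = {t. in_T n A t}"

definition Tminus :: "nat \<Rightarrow> 'a set \<Rightarrow> 'a tterm set" where
  "Tminus n A = {t \<in> T n A. (\<exists>x. t = Leaf x) \<or> (\<exists>\<sigma>. t = Node 0 \<sigma>)}"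

inductive tle :: "('a \<Rightarrow> 'a \<Rightarrow> bool) \<Rightarrow> 'a tterm \<Rightarrow> 'a tterm \<Rightarrow> bool" for le where
  leaf_leaf: "le x y \<Longrightarrow> tle le (Leaf x) (Leaf y)"
| leaf_node: "t \<in># ts \<Longrightarrow> tle le (Leaf x) t \<Longrightarrow> tle le (Leaf x) (Node j ts)"
| node_node: "mle (tle le) \<sigma> \<tau> \<Longrightarrow> tle le (Node i \<sigma>) (Node i \<tau>)"
| node_up: "i \<le> j \<Longrightarrow> t \<in># ts \<Longrightarrow> tle le (Node i \<sigma>) t \<Longrightarrow> tle le (Node i \<sigma>) (Node j ts)"

end

theory Submission
  imports Defs "HOL-Library.Ramsey"
begin

(* The order on T_n(X) is a partial order by routine inductions (antisymmetry by induction on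
   size), and T^-_{n+1}(X) is a subset of T_{n+1}(X); the point is that the order has no bad
   sequence in T_n(X). This is shown for the terms built from any set Y of atoms without bad
   sequences, with node labels in an interval {k..<k+m}, by induction on m. A term with labels
   in {k..<k+m+1} is also built, with labels in {k+1..<k+m+1}, from Y and its subterms of the
   form k * sigma, so by the induction hypothesis it remains to treat the terms k * sigma. Take
   a minimal bad sequence of them (Nash-Williams): the terms k * rho lying strictly below its
   members through nodes with labels >= k have no bad sequence, hence neither do the children
   (induction hypothesis again) nor the multisets of children (Higman's lemma for multisets,
   proved by the same argument and Ramsey's theorem). So the multisets of children of two
   members are comparable, and then so are the members themselves. *)

section \<open>Almost full relations\<close>

definition good :: "('b \<Rightarrow> 'b \<Rightarrow> bool) \<Rightarrow> (nat \<Rightarrow> 'b) \<Rightarrow> bool" where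
  "good P f \<longleftrightarrow> (\<exists>i j. i < j \<and> P (f i) (f j))"

definition almost_full_on :: "('b \<Rightarrow> 'b \<Rightarrow> bool) \<Rightarrow> 'b set \<Rightarrow> bool" where
  "almost_full_on P A \<longleftrightarrow> (\<forall>f. (\<forall>i. f i \<in> A) \<longrightarrow> good P f)"

lemma almost_full_onD: "almost_full_on P A \<Longrightarrow> (\<And>i. f i \<in> A) \<Longrightarrow> good P f"
  unfolding almost_full_on_def by blast

lemma almost_full_on_subset: "almost_full_on P A \<Longrightarrow> B \<subseteq> A \<Longrightarrow> almost_full_on P B"
  unfolding almost_full_on_def by blast

lemma good_subseq: "strict_mono \<phi> \<Longrightarrow> good P (f \<circ> \<phi>) \<Longrightarrow> good P f"
  unfolding good_def by (metis comp_apply strict_mono_less)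

lemma almost_full_on_Un:
  assumes "almost_full_on P A" and "almost_full_on P B"
  shows "almost_full_on P (A \<union> B)"
  unfolding almost_full_on_def
proof (intro allI impI)
  fix f :: "nat \<Rightarrow> _" assume f: "\<forall>i. f i \<in> A \<union> B"
  show "good P f"
  proof (cases "finite {i. f i \<in> A}")
    case True
    then obtain N where N: "\<forall>i\<in>{i. f i \<in> A}. i < N"
      using finite_nat_set_iff_bounded by blast
    then have "f (i + N) \<in> B" for i
      using f by force
    then have "good P (f \<circ> (\<lambda>i. i + N))"
      by (intro almost_full_onD[OF assms(2)]) simp
    then show ?thesis
      by (rule good_subseq[rotated]) (simp add: strict_mono_def)
  next
    case False
    then have "good P (f \<circ> enumerate {i. f i \<in> A})"
      using enumerate_in_set by (intro almost_full_onD[OF assms(1)]) fastforce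
    then show ?thesis
      by (rule good_subseq[OF strict_mono_enumerate[OF False]])
  qed
qed

lemma almost_full_on_image:
  assumes "almost_full_on P A" and "\<And>x y. x \<in> A \<Longrightarrow> y \<in> A \<Longrightarrow> P x y \<Longrightarrow> Q (h x) (h y)"
  shows "almost_full_on Q (h ` A)"
  unfolding almost_full_on_def
proof (intro allI impI)
  fix f :: "nat \<Rightarrow> _" assume "\<forall>i. f i \<in> h ` A"
  then have "\<forall>i. \<exists>x. x \<in> A \<and> f i = h x"
    by blast
  from choice[OF this] obtain g where g: "\<And>i. g i \<in> A" and f: "\<And>i. f i = h (g i)"
    by blast
  from g have "good P g"
    by (rule almost_full_onD[OF assms(1)])
  then show "good Q f"
    using assms(2) g unfolding good_def f by blast
qed

lemma almost_full_on_imp_homogeneous_subseq: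
  assumes "almost_full_on P A" and "\<And>i. f i \<in> A"
  obtains \<phi> :: "nat \<Rightarrow> nat" where "strict_mono \<phi>" "\<And>i j. i < j \<Longrightarrow> P (f (\<phi> i)) (f (\<phi> j))"
proof -
  define colour where "colour X = (if P (f (Min X)) (f (Max X)) then 0 else 1::nat)" for X
  have "\<forall>x\<in>UNIV. \<forall>y\<in>UNIV. x \<noteq> y \<longrightarrow> colour {x, y} < 2"
    by (simp add: colour_def)
  then obtain Y c where Y: "infinite Y" and hom: "\<forall>x\<in>Y. \<forall>y\<in>Y. x \<noteq> y \<longrightarrow> colour {x, y} = c"
    using Ramsey2[OF infinite_UNIV_nat] by (metis UNIV_I)
  define \<phi> where "\<phi> = enumerate Y"
  have \<phi>: "strict_mono \<phi>" "\<phi> i \<in> Y" for i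
    unfolding \<phi>_def using Y by (simp_all add: strict_mono_enumerate enumerate_in_set)
  have colour_\<phi>: "colour {\<phi> i, \<phi> j} = (if P (f (\<phi> i)) (f (\<phi> j)) then 0 else 1)" if "i < j" for i j
    using strict_monoD[OF \<phi>(1) that] unfolding colour_def by simp
  have "good P (f \<circ> \<phi>)"
    by (rule almost_full_onD[OF assms(1)]) (simp add: assms(2))
  then obtain i j where "i < j" "P (f (\<phi> i)) (f (\<phi> j))" unfolding good_def by auto
  have hom_\<phi>: "colour {\<phi> i, \<phi> j} = c" if "i < j" for i j
    using hom[rule_format, OF \<phi>(2) \<phi>(2)] strict_monoD[OF \<phi>(1) that] by simp
  have "c = 0"
    using hom_\<phi>[OF \<open>i < j\<close>] colour_\<phi>[OF \<open>i < j\<close>] \<open>P (f (\<phi> i)) (f (\<phi> j))\<close> by simp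
  then have chain: "P (f (\<phi> i)) (f (\<phi> j))" if "i < j" for i j
    using hom_\<phi>[OF that] colour_\<phi>[OF that] by (simp split: if_splits)
  show ?thesis by (rule that[OF \<phi>(1) chain])
qed

text \<open>One step of Nash-Williams' construction of a minimal bad sequence.\<close>

definition min_extension ::
    "((nat \<Rightarrow> 'b) \<Rightarrow> bool) \<Rightarrow> ('b \<Rightarrow> nat) \<Rightarrow> (nat \<Rightarrow> 'b) \<Rightarrow> nat \<Rightarrow> nat \<Rightarrow> 'b" where
  "min_extension B sz f i = (SOME g. B g \<and> (\<forall>j<i. g j = f j) \<and>
      (\<forall>h. B h \<and> (\<forall>j<i. h j = f j) \<longrightarrow> sz (g i) \<le> sz (h i)))"

lemma min_extension:
  assumes "B f"
  shows "B (min_extension B sz f i)" and "\<And>j. j < i \<Longrightarrow> min_extension B sz f i j = f j"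
    and "\<And>h. B h \<Longrightarrow> \<forall>j<i. h j = f j \<Longrightarrow> sz (min_extension B sz f i i) \<le> sz (h i)"
proof -
  let ?C = "\<lambda>g. B g \<and> (\<forall>j<i. g j = f j)"
  obtain g where "?C g" "\<forall>h. ?C h \<longrightarrow> sz (g i) \<le> sz (h i)"
    using ex_has_least_nat[of ?C f "\<lambda>g. sz (g i)"] assms by blast
  then have "\<exists>g. B g \<and> (\<forall>j<i. g j = f j) \<and> (\<forall>h. ?C h \<longrightarrow> sz (g i) \<le> sz (h i))"
    by blast
  then have "B (min_extension B sz f i) \<and> (\<forall>j<i. min_extension B sz f i j = f j) \<and>
      (\<forall>h. ?C h \<longrightarrow> sz (min_extension B sz f i i) \<le> sz (h i))"
    unfolding min_extension_def by (rule someI_ex)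
  then show "B (min_extension B sz f i)" "\<And>j. j < i \<Longrightarrow> min_extension B sz f i j = f j"
    "\<And>h. B h \<Longrightarrow> \<forall>j<i. h j = f j \<Longrightarrow> sz (min_extension B sz f i i) \<le> sz (h i)"
    by simp_all
qed

lemma ex_minimal_seq:
  fixes B :: "(nat \<Rightarrow> 'b) \<Rightarrow> bool" and sz :: "'b \<Rightarrow> nat"
  assumes "B f"
  obtains m where "\<And>i. \<exists>g. B g \<and> (\<forall>j\<le>i. g j = m j)"
    and "\<And>i h. B h \<Longrightarrow> \<forall>j<i. h j = m j \<Longrightarrow> sz (m i) \<le> sz (h i)"
proof -
  define g where "g = rec_nat (min_extension B sz f 0) (\<lambda>i g. min_extension B sz g (Suc i))"
  have g_simps: "g 0 = min_extension B sz f 0" "g (Suc i) = min_extension B sz (g i) (Suc i)" for i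
    unfolding g_def by simp_all
  have B_g: "B (g i)" for i
    by (induction i) (simp_all add: g_simps min_extension(1) assms)
  define m where "m i = g i i" for i
  have g_stable: "g k j = m j" if "j \<le> k" for j k
    using that
  proof (induction k)
    case (Suc k)
    then show ?case
      by (cases "j = Suc k")
        (simp_all add: m_def g_simps min_extension(2)[where B=B and f="g k", OF B_g])
  qed (simp add: m_def)
  show ?thesis
  proof
    show "\<exists>h. B h \<and> (\<forall>j\<le>i. h j = m j)" for i
      using B_g[of i] g_stable[of _ i] by blast
  next
    fix i h assume "B h" and h_prefix: "\<forall>j<i. h j = m j"
    show "sz (m i) \<le> sz (h i)"
    proof (cases i)
      case 0
      then show ?thesis
        using min_extension(3)[where B=B and f=f, OF assms \<open>B h\<close>] by (simp add: m_def g_simps)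
    next
      case (Suc k)
      have "\<forall>j<i. h j = g k j"
        using h_prefix g_stable Suc by simp
      then show ?thesis
        using min_extension(3)[where B=B and f="g k", OF B_g \<open>B h\<close>] Suc by (simp add: m_def g_simps)
    qed
  qed
qed

lemma not_good_splice:
  assumes "\<not> good P m" and "\<And>i. m i \<in> A" and "\<not> good P h" and "\<And>l. h l \<in> A"
    and h_sub: "\<And>l. sub (h l) (m (\<phi> l))" and p_le: "\<And>l. p \<le> \<phi> l"
    and P_sub: "\<And>w x y. w \<in> A \<Longrightarrow> x \<in> A \<Longrightarrow> y \<in> A \<Longrightarrow> P w x \<Longrightarrow> sub x y \<Longrightarrow> P w y"
  shows "\<not> good P (\<lambda>j. if j < p then m j else h (q + (j - p)))"
  unfolding good_def
proof (intro notI, elim exE conjE)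
  fix i j assume "i < j" and P_ij: "P (if i < p then m i else h (q + (i - p)))
      (if j < p then m j else h (q + (j - p)))"
  consider "j < p" | "i < p" "p \<le> j" | "p \<le> i"
    using \<open>i < j\<close> by linarith
  then show False
  proof cases
    case 1
    then show False
      using assms(1) P_ij \<open>i < j\<close> unfolding good_def by auto
  next
    case 2
    let ?l = "q + (j - p)"
    have "P (m i) (m (\<phi> ?l))"
      using P_sub[OF assms(2,4,2) _ h_sub] P_ij 2 by simp
    moreover have "i < \<phi> ?l"
      using 2 p_le[of ?l] by simp
    ultimately show False
      using assms(1) unfolding good_def by blast
  next
    case 3
    then have "q + (i - p) < q + (j - p)"
      using \<open>i < j\<close> by simp
    then show False
      using assms(3) P_ij 3 \<open>i < j\<close> unfolding good_def by auto
  qed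
qed

lemma ex_minimal_bad_seq:
  fixes sz :: "'b \<Rightarrow> nat"
  assumes "\<not> almost_full_on P A"
    and sub_size: "\<And>x y. sub x y \<Longrightarrow> sz x < sz y"
    and P_sub: "\<And>w x y. w \<in> A \<Longrightarrow> x \<in> A \<Longrightarrow> y \<in> A \<Longrightarrow> P w x \<Longrightarrow> sub x y \<Longrightarrow> P w y"
  obtains m where "\<And>i. m i \<in> A" and "\<not> good P m"
    and "almost_full_on P {x \<in> A. \<exists>i. sub x (m i)}"
proof -
  let ?B = "\<lambda>g. (\<forall>i. g i \<in> A) \<and> \<not> good P g"
  obtain f where "?B f"
    using assms(1) unfolding almost_full_on_def by blast
  then obtain m where prefix: "\<And>i. \<exists>g. ?B g \<and> (\<forall>j\<le>i. g j = m j)"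
    and minimal: "\<And>i h. ?B h \<Longrightarrow> \<forall>j<i. h j = m j \<Longrightarrow> sz (m i) \<le> sz (h i)"
    using ex_minimal_seq[where B="?B" and sz=sz] by blast
  have m_in: "m i \<in> A" for i
    using prefix[of i] by (metis order_refl)
  have "\<not> P (m i) (m j)" if "i < j" for i j
  proof -
    obtain g where "?B g" and "\<forall>k\<le>j. g k = m k"
      using prefix by blast
    then show ?thesis
      using that unfolding good_def by force
  qed
  then have m_bad: "\<not> good P m"
    unfolding good_def by blast
  have "almost_full_on P {x \<in> A. \<exists>i. sub x (m i)}"
    unfolding almost_full_on_def
  proof (intro allI impI, rule ccontr)
    fix h assume h_in: "\<forall>l. h l \<in> {x \<in> A. \<exists>i. sub x (m i)}" and "\<not> good P h"
    then have h_A: "h l \<in> A" for l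
      by blast
    from h_in have "\<forall>l. \<exists>i. sub (h l) (m i)"
      by blast
    then obtain \<phi> where \<phi>: "\<And>l. sub (h l) (m (\<phi> l))"
      by (metis choice)
    obtain l0 where l0: "\<And>l. \<phi> l0 \<le> \<phi> l"
      using ex_has_least_nat[of "\<lambda>_. True" 0 \<phi>] by blast
    let ?g = "\<lambda>j. if j < \<phi> l0 then m j else h (l0 + (j - \<phi> l0))"
    have "?B ?g"
      using not_good_splice[where P=P and A=A and sub=sub and \<phi>=\<phi> and p="\<phi> l0" and q=l0,
          OF m_bad m_in \<open>\<not> good P h\<close> h_A \<phi> l0 P_sub] m_in h_A
      by auto
    then have "sz (m (\<phi> l0)) \<le> sz (h l0)"
      using minimal[of ?g "\<phi> l0"] by simp
    then show False
      using sub_size[OF \<phi>[of l0]] by simp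
  qed
  with m_in m_bad show ?thesis
    by (rule that)
qed

section \<open>The multiset embedding\<close>

lemma mle_iff_rel_mset: "mle r \<sigma> \<tau> \<longleftrightarrow> (\<exists>\<tau>'. \<tau>' \<subseteq># \<tau> \<and> rel_mset r \<sigma> \<tau>')"
proof
  assume "mle r \<sigma> \<tau>"
  then obtain xs ys g where xs: "mset xs = \<sigma>" and ys: "mset ys = \<tau>"
    and g: "inj_on g {..<length xs}" "g ` {..<length xs} \<subseteq> {..<length ys}"
    and r: "\<forall>i<length xs. r (xs ! i) (ys ! g i)"
    unfolding mle_def by blast
  define idx where "idx = map g [0..<length xs]"
  have "distinct idx" and "set idx \<subseteq> set [0..<length ys]"
    using g unfolding idx_def by (auto simp: distinct_map lessThan_atLeast0)
  then have "mset idx \<subseteq># mset [0..<length ys]"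
    by (metis distinct_upt mset_set_set subset_imp_msubset_mset_set finite_set)
  then have "mset (map (nth ys) idx) \<subseteq># \<tau>"
    using image_mset_subseteq_mono[of "mset idx" _ "nth ys"] ys by (metis map_nth mset_map)
  moreover have "list_all2 r xs (map (nth ys) idx)"
    using r unfolding idx_def by (simp add: list_all2_conv_all_nth)
  ultimately show "\<exists>\<tau>'. \<tau>' \<subseteq># \<tau> \<and> rel_mset r \<sigma> \<tau>'"
    using xs unfolding rel_mset_def by blast
next
  assume "\<exists>\<tau>'. \<tau>' \<subseteq># \<tau> \<and> rel_mset r \<sigma> \<tau>'"
  then obtain xs ys zs where "mset xs = \<sigma>" "list_all2 r xs ys" "mset (ys @ zs) = \<tau>"
    unfolding rel_mset_def by (metis ex_mset mset_append subset_mset.le_iff_add)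
  then show "mle r \<sigma> \<tau>"
    unfolding mle_def
    by (intro exI[of _ xs] exI[of _ "ys @ zs"] exI[of _ id])
      (auto simp: list_all2_conv_all_nth nth_append)
qed

lemma mle_empty [simp]: "mle r {#} \<tau>"
  by (auto simp: mle_iff_rel_mset intro: exI[of _ "{#}"] rel_mset_Zero)

lemma mle_subset_mset_right: "mle r \<sigma> \<tau> \<Longrightarrow> \<tau> \<subseteq># \<tau>' \<Longrightarrow> mle r \<sigma> \<tau>'"
  unfolding mle_iff_rel_mset by (meson subset_mset.order_trans)

lemma mle_add_mset: "r a b \<Longrightarrow> mle r \<sigma> \<tau> \<Longrightarrow> mle r (add_mset a \<sigma>) (add_mset b \<tau>)"
  unfolding mle_iff_rel_mset by (metis mset_subset_eq_add_mset_cancel rel_mset_Plus)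

lemma mle_refl: "(\<And>x. x \<in># \<sigma> \<Longrightarrow> r x x) \<Longrightarrow> mle r \<sigma> \<sigma>"
  unfolding mle_iff_rel_mset by (blast intro: multiset.rel_refl_strong)

lemma mle_memD:
  assumes "mle r \<sigma> \<tau>" and "x \<in># \<sigma>"
  obtains y where "y \<in># \<tau>" and "r x y"
proof -
  obtain \<tau>' where "\<tau>' \<subseteq># \<tau>" and "rel_mset r \<sigma> \<tau>'"
    using assms(1) unfolding mle_iff_rel_mset by blast
  moreover obtain \<sigma>' where "\<sigma> = add_mset x \<sigma>'"
    using assms(2) by (metis multi_member_split)
  ultimately show ?thesis
    using that by (metis msed_rel_invL mset_subset_eqD union_single_eq_member)
qed

lemma rel_mset_subset_mset_left:
  "rel_mset r \<sigma> \<tau> \<Longrightarrow> \<sigma>' \<subseteq># \<sigma> \<Longrightarrow> \<exists>\<tau>'. \<tau>' \<subseteq># \<tau> \<and> rel_mset r \<sigma>' \<tau>'"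
proof (induction \<sigma>' arbitrary: \<sigma> \<tau>)
  case empty
  then show ?case by (auto intro: rel_mset_Zero)
next
  case (add x \<sigma>')
  obtain \<sigma>'' where \<sigma>: "\<sigma> = add_mset x \<sigma>''"
    using add.prems(2) by (metis insert_subset_eq_iff multi_member_split)
  then have "\<sigma>' \<subseteq># \<sigma>''"
    using add.prems(2) by simp
  obtain y \<tau>'' where "\<tau> = add_mset y \<tau>''" "r x y" "rel_mset r \<sigma>'' \<tau>''"
    using msed_rel_invL add.prems(1) \<sigma> by metis
  with add.IH[OF _ \<open>\<sigma>' \<subseteq># \<sigma>''\<close>] show ?case
    by (metis mset_subset_eq_add_mset_cancel rel_mset_Plus)
qed

lemma mle_trans:
  assumes "mle P \<rho> \<sigma>" and "mle Q \<sigma> \<tau>"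
    and "\<And>x y z. x \<in># \<rho> \<Longrightarrow> y \<in># \<sigma> \<Longrightarrow> z \<in># \<tau> \<Longrightarrow> P x y \<Longrightarrow> Q y z \<Longrightarrow> R x z"
  shows "mle R \<rho> \<tau>"
proof -
  obtain \<sigma>' where "\<sigma>' \<subseteq># \<sigma>" and P: "rel_mset P \<rho> \<sigma>'"
    using assms(1) unfolding mle_iff_rel_mset by blast
  moreover obtain \<tau>' where "\<tau>' \<subseteq># \<tau>" and "rel_mset Q \<sigma> \<tau>'"
    using assms(2) unfolding mle_iff_rel_mset by blast
  ultimately obtain \<tau>'' where "\<tau>'' \<subseteq># \<tau>" and Q: "rel_mset Q \<sigma>' \<tau>''"
    by (meson rel_mset_subset_mset_left subset_mset.order_trans)
  have "rel_mset (\<lambda>x y. P x y \<and> y \<in># \<sigma>) \<rho> \<sigma>'"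
    using P by (rule multiset.rel_mono_strong) (use \<open>\<sigma>' \<subseteq># \<sigma>\<close> in \<open>auto dest: mset_subset_eqD\<close>)
  with Q have "rel_mset ((\<lambda>x y. P x y \<and> y \<in># \<sigma>) OO Q) \<rho> \<tau>''"
    unfolding multiset.rel_compp by blast
  then have "rel_mset R \<rho> \<tau>''"
    by (rule multiset.rel_mono_strong)
      (use assms(3) \<open>\<tau>'' \<subseteq># \<tau>\<close> in \<open>auto dest: mset_subset_eqD\<close>)
  then show ?thesis
    unfolding mle_iff_rel_mset using \<open>\<tau>'' \<subseteq># \<tau>\<close> by blast
qed

lemma almost_full_on_mle:
  assumes "almost_full_on P A"
  shows "almost_full_on (mle P) {\<sigma>. set_mset \<sigma> \<subseteq> A}"
proof (rule ccontr)
  let ?M = "{\<sigma>. set_mset \<sigma> \<subseteq> A}"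
  assume "\<not> almost_full_on (mle P) ?M"
  then obtain m where m_in: "\<And>i. m i \<in> ?M" and "\<not> good (mle P) m"
    and af_below: "almost_full_on (mle P) {\<sigma> \<in> ?M. \<exists>i. \<sigma> \<subset># m i}"
    by (rule ex_minimal_bad_seq[where sub="(\<subset>#)" and sz=size])
      (blast intro: mset_subset_size mle_subset_mset_right subset_mset.less_imp_le)+
  then have m_bad: "\<not> mle P (m i) (m j)" if "i < j" for i j
    using that unfolding good_def by blast
  define a where "a i = (SOME x. x \<in># m i)" for i
  define \<tau> where "\<tau> i = m i - {#a i#}" for i
  have "m i \<noteq> {#}" for i
    using m_bad[of i "Suc i"] by auto
  then have "a i \<in># m i" for i
    unfolding a_def by (meson multiset_nonemptyE someI)
  then have m: "m i = add_mset (a i) (\<tau> i)" for i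
    unfolding \<tau>_def by simp
  have a_in: "a i \<in> A" for i
    using m_in \<open>a i \<in># m i\<close> by blast
  obtain \<phi> :: "nat \<Rightarrow> nat" where "strict_mono \<phi>"
    and a_chain: "\<And>i j. i < j \<Longrightarrow> P (a (\<phi> i)) (a (\<phi> j))"
    using almost_full_on_imp_homogeneous_subseq[OF assms, where f=a, OF a_in] by blast
  have "\<tau> i \<in> {\<sigma> \<in> ?M. \<exists>i. \<sigma> \<subset># m i}" for i
    using m_in[of i] m[of i] by (auto intro: exI[of _ i])
  then have "good (mle P) (\<tau> \<circ> \<phi>)"
    by (intro almost_full_onD[OF af_below]) simp
  then obtain i j where "i < j" "mle P (\<tau> (\<phi> i)) (\<tau> (\<phi> j))"
    unfolding good_def by auto
  then have "mle P (m (\<phi> i)) (m (\<phi> j))"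
    using a_chain m by (simp add: mle_add_mset)
  with m_bad \<open>strict_mono \<phi>\<close> \<open>i < j\<close> show False
    by (meson strict_monoD)
qed

lemma ex_maximal_finite:
  assumes "finite B" and "B \<noteq> {}" and "B \<subseteq> X"
    and trans: "transp_on X r" and antisym: "antisymp_on X r"
  shows "\<exists>x\<in>B. \<forall>z\<in>B. r x z \<longrightarrow> z = x"
proof -
  let ?less = "\<lambda>x y. r x y \<and> \<not> r y x"
  have "transp_on B ?less"
  proof (rule transp_onI)
    fix x y z assume "x \<in> B" "y \<in> B" "z \<in> B" "?less x y" "?less y z"
    then show "?less x z"
      using transp_onD[OF trans] \<open>B \<subseteq> X\<close> by (metis subsetD)
  qed
  moreover have "asymp_on B ?less"
    by (auto intro: asymp_onI)
  ultimately obtain x where "x \<in> B" and "\<forall>z\<in>B. z \<noteq> x \<longrightarrow> \<not> ?less x z"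
    using Finite_Set.bex_max_element[of B ?less] assms(1,2) by force
  then show ?thesis
    using antisymp_onD[OF antisym] \<open>B \<subseteq> X\<close> by blast
qed

lemma rel_mset_antisym:
  assumes "rel_mset r \<sigma> \<tau>" and "rel_mset r \<tau> \<sigma>"
    and trans: "transp_on X r" and antisym: "antisymp_on X r"
    and "set_mset \<sigma> \<subseteq> X" and "set_mset \<tau> \<subseteq> X"
  shows "\<sigma> = \<tau>"
  using assms(1,2,5,6)
proof (induction "size \<sigma>" arbitrary: \<sigma> \<tau>)
  case 0
  then show ?case by auto
next
  case (Suc n)
  then obtain x where "x \<in># \<sigma>" and x_max: "\<And>z. z \<in># \<sigma> \<Longrightarrow> r x z \<Longrightarrow> z = x"
    using ex_maximal_finite[OF _ _ Suc.prems(3) trans antisym] by force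
  obtain \<sigma>' where \<sigma>: "\<sigma> = add_mset x \<sigma>'"
    using \<open>x \<in># \<sigma>\<close> by (metis multi_member_split)
  then obtain y \<tau>' where \<tau>: "\<tau> = add_mset y \<tau>'" and "r x y" and \<sigma>'\<tau>': "rel_mset r \<sigma>' \<tau>'"
    using msed_rel_invL Suc.prems(1) by metis
  then obtain x' \<sigma>'' where \<sigma>'': "\<sigma> = add_mset x' \<sigma>''" and "r y x'" and \<tau>'\<sigma>'': "rel_mset r \<tau>' \<sigma>''"
    using msed_rel_invL Suc.prems(2) by metis
  have "x' \<in># \<sigma>" and "y \<in># \<tau>"
    using \<sigma>'' \<tau> by simp_all
  then have in_X: "x \<in> X" "y \<in> X" "x' \<in> X"
    using Suc.prems(3,4) \<open>x \<in># \<sigma>\<close> by auto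
  have "r x x'"
    using transp_onD[OF trans] in_X \<open>r x y\<close> \<open>r y x'\<close> by blast
  then have "x' = x"
    using x_max \<sigma>'' by simp
  then have "y = x" and "\<sigma>'' = \<sigma>'"
    using antisymp_onD[OF antisym] in_X \<open>r x y\<close> \<open>r y x'\<close> \<sigma> \<sigma>'' by auto
  moreover have "\<sigma>' = \<tau>'"
    using Suc.hyps(1)[OF _ \<sigma>'\<tau>'] \<tau>'\<sigma>'' Suc.hyps(2) Suc.prems(3,4) \<sigma> \<tau> \<open>\<sigma>'' = \<sigma>'\<close> by simp
  ultimately show ?case
    using \<sigma> \<tau> by simp
qed

lemma subset_mset_eq_if_size_le: "\<sigma> \<subseteq># \<tau> \<Longrightarrow> size \<tau> \<le> size \<sigma> \<Longrightarrow> \<sigma> = \<tau>"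
  by (metis mset_subset_size subset_mset.le_less not_less)

lemma mle_antisym:
  assumes "mle r \<sigma> \<tau>" and "mle r \<tau> \<sigma>"
    and "transp_on X r" and "antisymp_on X r"
    and "set_mset \<sigma> \<subseteq> X" and "set_mset \<tau> \<subseteq> X"
  shows "\<sigma> = \<tau>"
proof -
  obtain \<tau>' where "\<tau>' \<subseteq># \<tau>" and \<sigma>\<tau>': "rel_mset r \<sigma> \<tau>'"
    using assms(1) unfolding mle_iff_rel_mset by blast
  moreover obtain \<sigma>' where "\<sigma>' \<subseteq># \<sigma>" and \<tau>\<sigma>': "rel_mset r \<tau> \<sigma>'"
    using assms(2) unfolding mle_iff_rel_mset by blast
  moreover have "size \<sigma> = size \<tau>'" and "size \<tau> = size \<sigma>'"
    using rel_mset_size[OF \<sigma>\<tau>'] rel_mset_size[OF \<tau>\<sigma>'] .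
  ultimately have "\<tau>' = \<tau>" and "\<sigma>' = \<sigma>"
    using size_mset_mono[of \<tau>' \<tau>] size_mset_mono[of \<sigma>' \<sigma>]
    by (simp_all add: subset_mset_eq_if_size_le)
  with \<sigma>\<tau>' \<tau>\<sigma>' show ?thesis
    by (intro rel_mset_antisym[OF _ _ assms(3-6)]) simp_all
qed

lemma mle_size_multiset_mono:
  assumes "mle r \<sigma> \<tau>" and "\<And>x y. x \<in># \<sigma> \<Longrightarrow> r x y \<Longrightarrow> f x \<le> (f y :: nat)"
  shows "size_multiset f \<sigma> \<le> size_multiset f \<tau>"
proof -
  obtain \<tau>' where "\<tau>' \<subseteq># \<tau>" and "rel_mset r \<sigma> \<tau>'"
    using assms(1) unfolding mle_iff_rel_mset by blast
  have "size_multiset f \<sigma> \<le> size_multiset f \<tau>'"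
    using \<open>rel_mset r \<sigma> \<tau>'\<close> assms(2)
  proof (induction \<sigma> arbitrary: \<tau>')
    case (add x \<sigma>)
    then obtain y \<tau>'' where "\<tau>' = add_mset y \<tau>''" "r x y" "rel_mset r \<sigma> \<tau>''"
      by (metis msed_rel_invL)
    with add show ?case
      by (fastforce intro: add_mono)
  qed simp
  also have "\<dots> \<le> size_multiset f \<tau>"
    using \<open>\<tau>' \<subseteq># \<tau>\<close> by (metis le_add1 size_multiset_union subset_mset.le_iff_add)
  finally show ?thesis .
qed

section \<open>Terms with labels in an interval\<close>

inductive_set gen_terms :: "nat \<Rightarrow> nat \<Rightarrow> 'a tterm set \<Rightarrow> 'a tterm set" for k m Y where
  atom: "t \<in> Y \<Longrightarrow> t \<in> gen_terms k m Y"
| Node: "k \<le> i \<Longrightarrow> i < k + m \<Longrightarrow> \<forall>t\<in>#\<sigma>. t \<in> gen_terms k m Y \<Longrightarrow> Node i \<sigma> \<in> gen_terms k m Y"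

lemma gen_terms_mono:
  assumes "Y \<subseteq> Y'"
  shows "gen_terms k m Y \<subseteq> gen_terms k m Y'"
proof
  fix t assume "t \<in> gen_terms k m Y"
  then show "t \<in> gen_terms k m Y'"
    by (induction rule: gen_terms.induct) (use assms in \<open>auto intro: gen_terms.intros\<close>)
qed

lemma gen_terms_0: "gen_terms k 0 Y = Y"
  by (auto elim: gen_terms.cases intro: gen_terms.atom)

lemma T_subset_gen_terms: "T n A \<subseteq> gen_terms 0 n (Leaf ` A)"
proof
  fix t assume "t \<in> T n A"
  then have "in_T n A t"
    unfolding T_def by simp
  then show "t \<in> gen_terms 0 n (Leaf ` A)"
    by (induction rule: in_T.induct) (auto intro: gen_terms.intros)
qed

inductive subterm_ge :: "nat \<Rightarrow> 'a tterm \<Rightarrow> 'a tterm \<Rightarrow> bool" for k where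
  child: "t \<in># \<sigma> \<Longrightarrow> k \<le> i \<Longrightarrow> subterm_ge k t (Node i \<sigma>)"
| descend: "subterm_ge k s t \<Longrightarrow> t \<in># \<sigma> \<Longrightarrow> k \<le> i \<Longrightarrow> subterm_ge k s (Node i \<sigma>)"

lemma size_child_less: "t \<in># \<sigma> \<Longrightarrow> size t < size (Node i \<sigma>)"
  by (auto dest!: multi_member_split)

lemma subterm_ge_size_less: "subterm_ge k s t \<Longrightarrow> size s < size t"
proof (induction rule: subterm_ge.induct)
  case (child t \<sigma> i)
  show ?case by (rule size_child_less[OF child.hyps(1)])
next
  case (descend s t \<sigma> i)
  then show ?case using size_child_less[OF descend.hyps(2), of i] by simp
qed

lemma tle_Node_subterm_ge: "subterm_ge k s t \<Longrightarrow> tle le (Node k \<rho>) s \<Longrightarrow> tle le (Node k \<rho>) t"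
  by (induction rule: subterm_ge.induct) (auto intro: tle.node_up)

definition root_terms :: "nat \<Rightarrow> nat \<Rightarrow> 'a tterm set \<Rightarrow> 'a tterm set" where
  "root_terms k m Y = {Node k \<sigma> | \<sigma>. \<forall>t\<in>#\<sigma>. t \<in> gen_terms k (Suc m) Y}"

lemma gen_terms_Suc_decompose:
  "t \<in> gen_terms k (Suc m) Y \<Longrightarrow>
    t \<in> gen_terms (Suc k) m (Y \<union> {s \<in> root_terms k m Y. s = t \<or> subterm_ge k s t})"
proof (induction rule: gen_terms.induct)
  case (atom t)
  then show ?case by (simp add: gen_terms.atom)
next
  case (Node i \<sigma>)
  show ?case
  proof (cases "i = k")
    case True
    with Node.IH show ?thesis
      by (intro gen_terms.atom) (auto simp: root_terms_def)
  next
    case False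
    let ?Z = "Y \<union> {s \<in> root_terms k m Y. s = Node i \<sigma> \<or> subterm_ge k s (Node i \<sigma>)}"
    have "t \<in> gen_terms (Suc k) m ?Z" if "t \<in># \<sigma>" for t
    proof (rule subsetD[OF gen_terms_mono])
      show "t \<in> gen_terms (Suc k) m (Y \<union> {s \<in> root_terms k m Y. s = t \<or> subterm_ge k s t})"
        using Node.IH that by blast
      show "Y \<union> {s \<in> root_terms k m Y. s = t \<or> subterm_ge k s t} \<subseteq> ?Z"
        using that Node.hyps(1) by (auto intro: subterm_ge.intros)
    qed
    with False Node.hyps(1,2) show ?thesis
      by (intro gen_terms.Node) auto
  qed
qed

lemma almost_full_on_root_terms:
  assumes "almost_full_on (tle le) Y"
    and IH: "\<And>Z. almost_full_on (tle le) Z \<Longrightarrow> almost_full_on (tle le) (gen_terms (Suc k) m Z)"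
  shows "almost_full_on (tle le) (root_terms k m Y)"
proof (rule ccontr)
  let ?R = "root_terms k m Y"
  assume "\<not> almost_full_on (tle le) ?R"
  then obtain r where r_in: "\<And>i. r i \<in> ?R" and "\<not> good (tle le) r"
    and af_below: "almost_full_on (tle le) {s \<in> ?R. \<exists>i. subterm_ge k s (r i)}"
    by (rule ex_minimal_bad_seq[where sub="subterm_ge k" and sz=size])
      (auto simp: root_terms_def intro: subterm_ge_size_less tle_Node_subterm_ge)
  let ?Z = "Y \<union> {s \<in> ?R. \<exists>i. subterm_ge k s (r i)}"
  have "\<forall>i. \<exists>\<sigma>. r i = Node k \<sigma> \<and> (\<forall>t\<in>#\<sigma>. t \<in> gen_terms k (Suc m) Y)"
    using r_in unfolding root_terms_def by blast
  from choice[OF this] obtain \<sigma> where r: "\<And>i. r i = Node k (\<sigma> i)"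
    and \<sigma>_in: "\<And>i. \<forall>t\<in>#\<sigma> i. t \<in> gen_terms k (Suc m) Y"
    by blast
  have "set_mset (\<sigma> i) \<subseteq> gen_terms (Suc k) m ?Z" for i
  proof
    fix t assume "t \<in># \<sigma> i"
    show "t \<in> gen_terms (Suc k) m ?Z"
    proof (rule subsetD[OF gen_terms_mono])
      show "t \<in> gen_terms (Suc k) m (Y \<union> {s \<in> ?R. s = t \<or> subterm_ge k s t})"
        using gen_terms_Suc_decompose \<sigma>_in \<open>t \<in># \<sigma> i\<close> by blast
      show "Y \<union> {s \<in> ?R. s = t \<or> subterm_ge k s t} \<subseteq> ?Z"
        using \<open>t \<in># \<sigma> i\<close> unfolding r by (auto intro: subterm_ge.intros)
    qed
  qed
  moreover have "almost_full_on (mle (tle le)) {\<sigma>. set_mset \<sigma> \<subseteq> gen_terms (Suc k) m ?Z}"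
    by (intro almost_full_on_mle IH almost_full_on_Un assms af_below)
  ultimately obtain i j where "i < j" and "mle (tle le) (\<sigma> i) (\<sigma> j)"
    unfolding almost_full_on_def good_def by blast
  then have "tle le (r i) (r j)"
    unfolding r by (intro tle.node_node)
  with \<open>\<not> good (tle le) r\<close> \<open>i < j\<close> show False
    unfolding good_def by blast
qed

lemma almost_full_on_gen_terms:
  "almost_full_on (tle le) Y \<Longrightarrow> almost_full_on (tle le) (gen_terms k m Y)"
proof (induction m arbitrary: k Y)
  case 0
  then show ?case by (simp add: gen_terms_0)
next
  case (Suc m)
  have "gen_terms k (Suc m) Y \<subseteq> gen_terms (Suc k) m (Y \<union> root_terms k m Y)"
  proof
    fix t assume "t \<in> gen_terms k (Suc m) Y"
    then show "t \<in> gen_terms (Suc k) m (Y \<union> root_terms k m Y)"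
      by (rule subsetD[OF gen_terms_mono, rotated, OF gen_terms_Suc_decompose]) blast
  qed
  moreover have "almost_full_on (tle le) (gen_terms (Suc k) m (Y \<union> root_terms k m Y))"
    using Suc by (intro Suc.IH almost_full_on_Un almost_full_on_root_terms)
  ultimately show ?case
    by (rule almost_full_on_subset[rotated])
qed

lemma almost_full_on_T: "almost_full_on le A \<Longrightarrow> almost_full_on (tle le) (T n A)"
  by (rule almost_full_on_subset[OF almost_full_on_gen_terms T_subset_gen_terms])
    (auto intro: almost_full_on_image tle.leaf_leaf)

section \<open>The term order is a partial order\<close>

inductive_cases tle_LeafE: "tle le s (Leaf y)"
inductive_cases tle_Node_leftE: "tle le (Node i \<sigma>) t"
inductive_cases tle_Node_rightE: "tle le s (Node j \<tau>)"

lemma tle_NodeE [consumes 1, case_names same_label below_child]: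
  assumes "tle le s (Node j \<tau>)"
  obtains \<sigma> where "s = Node j \<sigma>" and "mle (tle le) \<sigma> \<tau>"
  | t where "t \<in># \<tau>" and "tle le s t" and "\<And>i \<sigma>. s = Node i \<sigma> \<Longrightarrow> i \<le> j"
  using assms by (elim tle_Node_rightE) (auto intro: that)

lemma tle_Node_label_mono: "tle le (Node i \<sigma>) t \<Longrightarrow> \<exists>j \<tau>. t = Node j \<tau> \<and> i \<le> j"
  by (erule tle_Node_leftE) auto

lemma tle_Node_if_tle_child:
  assumes "tle le s t" and "t \<in># \<tau>" and "\<And>i \<sigma>. s = Node i \<sigma> \<Longrightarrow> i \<le> j"
  shows "tle le s (Node j \<tau>)"
  using assms by (cases s) (auto intro: tle.leaf_node tle.node_up)

lemma tle_Leaf_right_iff: "tle le s (Leaf y) \<longleftrightarrow> (\<exists>x. s = Leaf x \<and> le x y)"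
  by (auto elim: tle_LeafE intro: tle.leaf_leaf)

lemma tle_refl: "reflp_on A le \<Longrightarrow> set_tterm t \<subseteq> A \<Longrightarrow> tle le t t"
proof (induction t)
  case (Leaf x)
  then show ?case by (simp add: reflp_on_def tle.leaf_leaf)
next
  case (Node i \<sigma>)
  then show ?case by (auto intro!: tle.node_node mle_refl)
qed

lemma tle_trans:
  assumes "tle le b c" and "tle le a b" and trans: "transp_on A le"
    and "set_tterm a \<subseteq> A" and "set_tterm b \<subseteq> A" and "set_tterm c \<subseteq> A"
  shows "tle le a c"
  using assms(1,2,4-6)
proof (induction arbitrary: a rule: tle.induct)
  case (leaf_leaf x y)
  then obtain w where "a = Leaf w" and "le w x" and "w \<in> A"
    by (auto simp: tle_Leaf_right_iff)
  with leaf_leaf show ?case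
    using transp_onD[OF trans, of w x y] by (simp add: tle.leaf_leaf)
next
  case (leaf_node t ts x j)
  then have "tle le a t"
    by auto
  with leaf_node show ?case
    by (auto simp: tle_Leaf_right_iff intro: tle.leaf_node)
next
  case (node_node \<sigma> \<tau> i)
  note IH = node_node.IH and sets = node_node.prems(2-4)
  have up: "tle le a (Node i \<tau>)"
    if "t \<in># \<sigma>" and "tle le a t" and "\<And>i' \<rho>. a = Node i' \<rho> \<Longrightarrow> i' \<le> i" for t
  proof -
    obtain t' where "t' \<in># \<tau>" and "tle le t t'" and IH_t: "\<forall>a. tle le a t \<longrightarrow> set_tterm a \<subseteq> A \<longrightarrow>
        set_tterm t \<subseteq> A \<longrightarrow> set_tterm t' \<subseteq> A \<longrightarrow> tle le a t'"
      using mle_memD[OF IH \<open>t \<in># \<sigma>\<close>] by blast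
    moreover have "set_tterm t \<subseteq> A" and "set_tterm t' \<subseteq> A"
      using sets \<open>t \<in># \<sigma>\<close> \<open>t' \<in># \<tau>\<close> by auto
    ultimately have "tle le a t'"
      using sets(1) \<open>tle le a t\<close> by blast
    then show ?thesis
      using \<open>t' \<in># \<tau>\<close> that(3) by (rule tle_Node_if_tle_child)
  qed
  from \<open>tle le a (Node i \<sigma>)\<close> show ?case
  proof (cases rule: tle_NodeE)
    case (same_label \<rho>)
    have "mle (tle le) \<rho> \<tau>"
      by (rule mle_trans[OF \<open>mle (tle le) \<rho> \<sigma>\<close> IH])
        (use sets \<open>a = Node i \<rho>\<close> in \<open>fastforce simp: UN_subset_iff\<close>)
    then show ?thesis
      unfolding \<open>a = Node i \<rho>\<close> by (rule tle.node_node)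
  next
    case (below_child t)
    then show ?thesis by (rule up)
  qed
next
  case (node_up i j t ts \<sigma>)
  then have "set_tterm t \<subseteq> A"
    by auto
  with node_up have "tle le a t"
    by simp
  moreover have "i' \<le> j" if "a = Node i' \<rho>" for i' \<rho>
    using tle_Node_label_mono node_up.prems(1) node_up.hyps(1) that by fastforce
  ultimately show ?case
    using node_up.hyps(2) tle_Node_if_tle_child by blast
qed

lemma tle_size_le: "tle le s t \<Longrightarrow> size s \<le> size t"
proof (induction rule: tle.induct)
  case (leaf_leaf x y)
  then show ?case by simp
next
  case (leaf_node t ts x j)
  then show ?case using size_child_less[OF leaf_node.hyps(1), of j] by simp
next
  case (node_node \<sigma> \<tau> i)
  then show ?case using mle_size_multiset_mono[OF node_node.IH, of size] by simp
next
  case (node_up i j t ts \<sigma>)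
  then show ?case using size_child_less[OF node_up.hyps(2), of j] by simp
qed

lemma mle_if_tle_Node_same_size:
  assumes "tle le (Node i \<sigma>) (Node i \<tau>)" and "size (Node i \<tau>) \<le> size (Node i \<sigma>)"
  shows "mle (tle le) \<sigma> \<tau>"
  using assms(1)
proof (cases rule: tle_NodeE)
  case (below_child t)
  have "size (Node i \<sigma>) \<le> size t"
    using \<open>tle le (Node i \<sigma>) t\<close> by (rule tle_size_le)
  also have "\<dots> < size (Node i \<tau>)"
    using \<open>t \<in># \<tau>\<close> by (rule size_child_less)
  finally show ?thesis
    using assms(2) by simp
qed simp

lemma Node_eq_if_tle_both_ways:
  assumes "tle le (Node i \<sigma>) (Node j \<tau>)" and "tle le (Node j \<tau>) (Node i \<sigma>)"
    and "transp_on X (tle le)" and "antisymp_on X (tle le)"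
    and "set_mset \<sigma> \<subseteq> X" and "set_mset \<tau> \<subseteq> X"
  shows "Node i \<sigma> = Node j \<tau>"
proof -
  have "i = j"
    using tle_Node_label_mono[OF assms(1)] tle_Node_label_mono[OF assms(2)] by simp
  moreover have "size (Node i \<sigma>) = size (Node j \<tau>)"
    using tle_size_le assms(1,2) by (meson le_antisym)
  ultimately have "mle (tle le) \<sigma> \<tau>" and "mle (tle le) \<tau> \<sigma>"
    using mle_if_tle_Node_same_size[of le i] assms(1,2) by simp_all
  then have "\<sigma> = \<tau>"
    using mle_antisym assms(3-6) by blast
  with \<open>i = j\<close> show ?thesis
    by simp
qed

lemma tle_antisym:
  assumes "tle le s t" and "tle le t s"
    and trans: "transp_on A le" and antisym: "antisymp_on A le"
    and "set_tterm s \<subseteq> A" and "set_tterm t \<subseteq> A"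
  shows "s = t"
  using assms(1,2,5,6)
proof (induction s arbitrary: t rule: measure_induct_rule[of size])
  case (less s)
  show ?case
  proof (cases s)
    case (Leaf x)
    then obtain y where t: "t = Leaf y" and "le y x"
      using less.prems(2) by (auto simp: tle_Leaf_right_iff)
    moreover have "le x y"
      using less.prems(1) Leaf t by (simp add: tle_Leaf_right_iff)
    ultimately show ?thesis
      using antisymp_onD[OF antisym] less.prems(3,4) Leaf by simp
  next
    case (Node i \<sigma>)
    then obtain j \<tau> where t: "t = Node j \<tau>"
      using tle_Node_label_mono less.prems(1) by blast
    define X where "X = set_mset \<sigma> \<union> set_mset \<tau>"
    have X_terms: "set_tterm x \<subseteq> A" if "x \<in> X" for x
      using that less.prems(3,4) Node t unfolding X_def by auto
    have X_smaller: "size x < size s" if "x \<in> X" for x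
      using that size_child_less[of x \<sigma> i] size_child_less[of x \<tau> j] tle_size_le[OF less.prems(2)]
      unfolding X_def Node t by auto
    have "transp_on X (tle le)"
      by (rule transp_onI) (use tle_trans[OF _ _ trans] X_terms in blast)
    moreover have "antisymp_on X (tle le)"
      by (rule antisymp_onI) (use less.IH X_smaller X_terms in blast)
    ultimately show ?thesis
      using Node_eq_if_tle_both_ways less.prems(1,2) unfolding Node t X_def by blast
  qed
qed

lemma po_on_iff: "po_on A le \<longleftrightarrow> reflp_on A le \<and> antisymp_on A le \<and> transp_on A le"
  unfolding po_on_def reflp_on_def antisymp_on_def transp_on_def by blast

lemma po_on_terms:
  assumes "po_on A le"
  shows "po_on {t. set_tterm t \<subseteq> A} (tle le)"
  unfolding po_on_iff
proof (intro conjI reflp_onI antisymp_onI transp_onI)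
  have "reflp_on A le" "antisymp_on A le" "transp_on A le"
    using assms unfolding po_on_iff by simp_all
  fix s t u
  assume "s \<in> {t. set_tterm t \<subseteq> A}" and "t \<in> {t. set_tterm t \<subseteq> A}"
    and "u \<in> {t. set_tterm t \<subseteq> A}"
  then show "tle le s s"
    using tle_refl[OF \<open>reflp_on A le\<close>] by simp
  show "tle le s t \<Longrightarrow> tle le t s \<Longrightarrow> s = t"
    using tle_antisym[OF _ _ \<open>transp_on A le\<close> \<open>antisymp_on A le\<close>] \<open>s \<in> _\<close> \<open>t \<in> _\<close> by simp
  show "tle le s t \<Longrightarrow> tle le t u \<Longrightarrow> tle le s u"
    using tle_trans[OF _ _ \<open>transp_on A le\<close>] \<open>s \<in> _\<close> \<open>t \<in> _\<close> \<open>u \<in> _\<close> by simp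
qed

lemma T_subset_terms: "T n A \<subseteq> {t. set_tterm t \<subseteq> A}"
proof
  fix t assume "t \<in> T n A"
  then have "in_T n A t"
    unfolding T_def by simp
  then show "t \<in> {t. set_tterm t \<subseteq> A}"
    by (induction rule: in_T.induct) auto
qed

lemma po_on_subset: "po_on A le \<Longrightarrow> B \<subseteq> A \<Longrightarrow> po_on B le"
  unfolding po_on_def by blast

lemma wpo_on_iff: "wpo_on A le \<longleftrightarrow> po_on A le \<and> almost_full_on le A"
  unfolding wpo_on_def almost_full_on_def good_def by blast

lemma wpo_on_subset: "wpo_on A le \<Longrightarrow> B \<subseteq> A \<Longrightarrow> wpo_on B le"
  unfolding wpo_on_def po_on_def by blast

lemma wpo_on_T: "wpo_on A le \<Longrightarrow> wpo_on (T n A) (tle le)"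
  unfolding wpo_on_iff
  using po_on_subset[OF po_on_terms T_subset_terms] almost_full_on_T by blast

theorem corollary6p6:
  fixes A :: "'a set" and le :: "'a \<Rightarrow> 'a \<Rightarrow> bool" and n :: nat
  assumes "wpo_on A le"
  shows "wpo_on (T n A) (tle le) \<and> wpo_on (Tminus (Suc n) A) (tle le)"
proof
  show "wpo_on (T n A) (tle le)"
    using assms by (rule wpo_on_T)
  have "Tminus (Suc n) A \<subseteq> T (Suc n) A"
    unfolding Tminus_def by blast
  then show "wpo_on (Tminus (Suc n) A) (tle le)"
    using assms by (intro wpo_on_subset[OF wpo_on_T])
qed

end
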